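(* Let $\kappa>0$, $g>0$, $p\ge0$, $\delta^2>0$, and let $h$ be a random variable with Gamma distribution of shape $\kappa$ and scale $g/\kappa$. Let $c=\log_2(1+ph/\delta^2)$, $\bar\gamma=pg/\delta^2$ and $\beta=e^{\psi(\kappa)}/\kappa$, where $\psi$ is the digamma function. Then $$\mathbb{E}\{c\}\ \ge\ \bar c\triangleq\log_2(1+\beta\bar\gamma).$$ Moreover, the bound is asymptotically tight: $\mathbb{E}\{c\}-\bar c\to0$ as $\bar\gamma\to\infty$ or as $\kappa\to\infty$. *)

theory Defs
  imports "HOL-Analysis.Analysis"
begin

definition gamma_density :: "real \<Rightarrow> real \<Rightarrow> real \<Rightarrow> real" where
  "gamma_density k s x =
     (if 0 < x then x powr (k - 1) * exp (- x / s) / (Gamma k * s powr k) else 0)"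

text \<open>The Gamma distribution with shape k and scale s, as a measure on the reals
  (the law of the random variable h).\<close>
definition gamma_distr :: "real \<Rightarrow> real \<Rightarrow> real measure" where
  "gamma_distr k s = density lborel (\<lambda>x. ennreal (gamma_density k s x))"

end

theory Submission
  imports Defs "HOL-Probability.Probability_Measure"
begin

(* For h ~ Gamma(k, s) the moments are E h^t = s^t Gamma(k + t) / Gamma(k) for t > -k; differentiating
   at t = 0 gives E ln h = ln s + Digamma(k), i.e. s e^Digamma(k) is the geometric mean of h.  The lower
   bound is Jensen's inequality for the convex map u \<mapsto> ln (1 + a e^u) at u = ln h.  As a \<rightarrow> \<infinity>,
   ln (1 + a h) - ln (a h) \<le> (a h)^-t / t with E h^-t finite, so the gap vanishes.  As k \<rightarrow> \<infinity> with
   mean g fixed, Jensen for the concave ln (1 + a h) caps the expectation at ln (1 + a g), and the bound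
   converges to the same value because Digamma(k) - ln k \<rightarrow> 0, which follows by integrating
   1 - 1/h \<le> ln h \<le> h - 1 against Gamma(k, 1/k). *)

lemma nn_integral_powr_exp_eq_Gamma:
  fixes a s :: real
  assumes a: "a > 0" and s: "s > 0"
  shows "(\<integral>\<^sup>+x. ennreal (indicator {0<..} x * x powr (a - 1) * exp (- x / s)) \<partial>lborel)
         = ennreal (s powr a * Gamma a)"
proof -
  define N where "N = (\<integral>\<^sup>+x. ennreal (indicator {0<..} x * x powr (a - 1) * exp (- x / s)) \<partial>lborel)"
  have "ennreal (Gamma a) = (\<integral>\<^sup>+t. ennreal (indicator {0..} t * t powr (a - 1) / exp t) \<partial>lborel)"
    by (rule Gamma_conv_nn_integral_real[OF a])
  also have "\<dots> = ennreal \<bar>1 / s\<bar> * (\<integral>\<^sup>+x. ennreal (indicator {0..} (0 + (1 / s) * x)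
      * (0 + (1 / s) * x) powr (a - 1) / exp (0 + (1 / s) * x)) \<partial>lborel)"
    by (rule nn_integral_real_affine) (use s in auto)
  also have "(\<integral>\<^sup>+x. ennreal (indicator {0..} (0 + (1 / s) * x)
      * (0 + (1 / s) * x) powr (a - 1) / exp (0 + (1 / s) * x)) \<partial>lborel)
      = (\<integral>\<^sup>+x. ennreal (s powr (1 - a)) * ennreal (indicator {0<..} x * x powr (a - 1) * exp (- x / s)) \<partial>lborel)"
  proof (rule nn_integral_cong)
    fix x :: real
    show "ennreal (indicator {0..} (0 + (1 / s) * x) * (0 + (1 / s) * x) powr (a - 1) / exp (0 + (1 / s) * x))
        = ennreal (s powr (1 - a)) * ennreal (indicator {0<..} x * x powr (a - 1) * exp (- x / s))"
    proof (cases "x > 0")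
      case True
      have "(x / s) powr (a - 1) = x powr (a - 1) * s powr (1 - a)"
        using True s by (simp add: powr_divide powr_minus_divide powr_diff)
      then show ?thesis using True s
        by (simp add: ennreal_mult'[symmetric] exp_minus field_simps)
    next
      case False
      then have "x / s \<le> 0" using s by (simp add: divide_nonpos_pos)
      then show ?thesis using False s by (cases "x = 0") (auto simp: indicator_def)
    qed
  qed
  also have "\<dots> = ennreal (s powr (1 - a)) * N"
    unfolding N_def by (rule nn_integral_cmult) auto
  finally have "ennreal (Gamma a) = ennreal (s powr (- a)) * N"
    using s by (simp add: mult.assoc[symmetric] ennreal_mult[symmetric] powr_diff powr_minus divide_simps)
  then have "ennreal (s powr a * Gamma a) = ennreal (s powr a) * ennreal (s powr (- a)) * N"
    using a by (simp add: ennreal_mult Gamma_real_pos mult.assoc)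
  also have "\<dots> = N" using s by (simp add: ennreal_mult[symmetric] powr_minus)
  finally show ?thesis unfolding N_def by simp
qed

lemma gamma_density_measurable [measurable]: "gamma_density k s \<in> borel_measurable borel"
  unfolding gamma_density_def by measurable

lemma sets_gamma_distr [measurable_cong, simp]: "sets (gamma_distr k s) = sets borel"
  unfolding gamma_distr_def by simp

lemma AE_gamma_distr_pos: "AE x in gamma_distr k s. 0 < x"
  unfolding gamma_distr_def by (subst AE_density) (auto simp: gamma_density_def)

lemma nn_integral_gamma_distr_powr:
  assumes k: "k > 0" and s: "s > 0" and t: "k + t > 0"
  shows "(\<integral>\<^sup>+x. ennreal (x powr t) \<partial>gamma_distr k s) = ennreal (s powr t * Gamma (k + t) / Gamma k)"
proof -
  have "(\<integral>\<^sup>+x. ennreal (x powr t) \<partial>gamma_distr k s)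
      = (\<integral>\<^sup>+x. ennreal (gamma_density k s x) * ennreal (x powr t) \<partial>lborel)"
    unfolding gamma_distr_def by (rule nn_integral_density) auto
  also have "\<dots> = (\<integral>\<^sup>+x. ennreal (1 / (Gamma k * s powr k))
      * ennreal (indicator {0<..} x * x powr (k + t - 1) * exp (- x / s)) \<partial>lborel)"
  proof (rule nn_integral_cong)
    fix x :: real
    show "ennreal (gamma_density k s x) * ennreal (x powr t) = ennreal (1 / (Gamma k * s powr k))
        * ennreal (indicator {0<..} x * x powr (k + t - 1) * exp (- x / s))"
    proof (cases "x > 0")
      case True
      then have "x powr (k + t - 1) = x powr (k - 1) * x powr t"
        by (simp add: powr_add[symmetric] algebra_simps)
      then show ?thesis using True k s
        by (simp add: gamma_density_def ennreal_mult'[symmetric] Gamma_real_pos)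
    qed (simp add: gamma_density_def)
  qed
  also have "\<dots> = ennreal (1 / (Gamma k * s powr k)) * ennreal (s powr (k + t) * Gamma (k + t))"
    using nn_integral_powr_exp_eq_Gamma[OF t s] by (simp add: nn_integral_cmult del: ennreal_mult)
  also have "\<dots> = ennreal (s powr t * Gamma (k + t) / Gamma k)"
    using k s t by (simp add: ennreal_mult[symmetric] Gamma_real_pos powr_add)
  finally show ?thesis .
qed

lemma prob_space_gamma_distr:
  assumes "k > 0" and "s > 0"
  shows "prob_space (gamma_distr k s)"
proof
  have "AE x in gamma_distr k s. 1 = ennreal (x powr 0)"
    using AE_gamma_distr_pos[of k s] by eventually_elim simp
  then have "(\<integral>\<^sup>+x. 1 \<partial>gamma_distr k s) = (\<integral>\<^sup>+x. ennreal (x powr 0) \<partial>gamma_distr k s)"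
    by (rule nn_integral_cong_AE)
  also have "\<dots> = 1"
    using nn_integral_gamma_distr_powr[of k s 0] assms Gamma_real_pos[OF assms(1)] by simp
  finally show "emeasure (gamma_distr k s) (space (gamma_distr k s)) = 1"
    by simp
qed

lemma has_bochner_integral_gamma_distr_powr:
  assumes "k > 0" and "s > 0" and "k + t > 0"
  shows "has_bochner_integral (gamma_distr k s) (\<lambda>x. x powr t) (s powr t * Gamma (k + t) / Gamma k)"
  using assms nn_integral_gamma_distr_powr[OF assms]
  by (intro has_bochner_integral_nn_integral) (auto simp: Gamma_real_pos less_imp_le)

lemma integrable_gamma_distr_powr:
  assumes "k > 0" and "s > 0" and "k + t > 0"
  shows "integrable (gamma_distr k s) (\<lambda>x. x powr t)"
  using has_bochner_integral_gamma_distr_powr[OF assms] by (rule integrable.intros)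

lemma integral_gamma_distr_powr:
  assumes "k > 0" and "s > 0" and "k + t > 0"
  shows "(\<integral>x. x powr t \<partial>gamma_distr k s) = s powr t * Gamma (k + t) / Gamma k"
  using has_bochner_integral_gamma_distr_powr[OF assms] by (rule has_bochner_integral_integral_eq)

lemma has_bochner_integral_gamma_distr_id:
  assumes k: "k > 0" and s: "s > 0"
  shows "has_bochner_integral (gamma_distr k s) (\<lambda>x. x) (k * s)"
proof -
  have "Gamma (k + 1) = k * Gamma k"
    using Gamma_plus1[of k] k by (auto simp: nonpos_Ints_def)
  \<comment> \<open>the simplifier turns the real power x powr 1 into \<bar>x\<bar>\<close>
  then have "has_bochner_integral (gamma_distr k s) (\<lambda>x. \<bar>x\<bar>) (k * s)"
    using has_bochner_integral_gamma_distr_powr[OF k s, of 1] k s Gamma_real_pos[OF k]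
    by (simp add: mult.commute)
  moreover have "AE x in gamma_distr k s. x = \<bar>x\<bar>"
    using AE_gamma_distr_pos[of k s] by eventually_elim simp
  ultimately show ?thesis
    by (subst has_bochner_integral_cong_AE[where g = "\<lambda>x. \<bar>x\<bar>"]) simp_all
qed

lemma mult_ln_le_powr_minus_one:
  fixes x t :: real
  assumes "x > 0"
  shows "t * ln x \<le> x powr t - 1"
  using ln_le_minus_one[of "x powr t"] assms by (simp add: ln_powr)

lemma abs_ln_le_powr_plus_powr:
  fixes x t :: real
  assumes x: "x > 0" and t: "t > 0"
  shows "\<bar>ln x\<bar> \<le> (x powr t + x powr - t) / t"
proof -
  have "t * ln x \<le> x powr t - 1" and "- t * ln x \<le> x powr - t - 1"
    using mult_ln_le_powr_minus_one[OF x, of t] mult_ln_le_powr_minus_one[OF x, of "- t"] by simp_all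
  moreover have "x powr t > 0" and "x powr - t > 0"
    using x by auto
  ultimately have "\<bar>t * ln x\<bar> \<le> x powr t + x powr - t"
    unfolding abs_le_iff by linarith
  then show ?thesis
    using t by (simp add: abs_mult field_simps)
qed

lemma integrable_gamma_distr_ln:
  assumes k: "k > 0" and s: "s > 0"
  shows "integrable (gamma_distr k s) ln"
proof (rule Bochner_Integration.integrable_bound)
  show "integrable (gamma_distr k s) (\<lambda>x. (x powr (k / 2) + x powr - (k / 2)) / (k / 2))"
    using integrable_gamma_distr_powr[OF k s, of "k / 2"] integrable_gamma_distr_powr[OF k s, of "- (k / 2)"] k
    by auto
  show "AE x in gamma_distr k s. norm (ln x) \<le> norm ((x powr (k / 2) + x powr - (k / 2)) / (k / 2))"
    using AE_gamma_distr_pos[of k s]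
  proof eventually_elim
    case (elim x)
    have "\<bar>ln x\<bar> \<le> (x powr (k / 2) + x powr - (k / 2)) / (k / 2)"
      by (rule abs_ln_le_powr_plus_powr) (use elim k in auto)
    then show ?case
      by (simp only: real_norm_def)
  qed
qed measurable

lemma gamma_distr_moment_has_real_derivative:
  assumes k: "k > 0" and s: "s > 0"
  shows "((\<lambda>t. s powr t * Gamma (k + t) / Gamma k) has_real_derivative ln s + Digamma k) (at 0)"
proof -
  have "Gamma k \<noteq> 0"
    using Gamma_real_pos[OF k] by linarith
  then show ?thesis
    using k s by (auto intro!: derivative_eq_intros simp: nonpos_Ints_def field_simps)
qed

lemma has_bochner_integral_gamma_distr_powr_quotient:
  assumes k: "k > 0" and s: "s > 0" and t: "k + t > 0"
  shows "has_bochner_integral (gamma_distr k s) (\<lambda>x. (x powr t - 1) / t)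
           ((s powr t * Gamma (k + t) / Gamma k - 1) / t)"
proof -
  interpret prob_space "gamma_distr k s"
    by (rule prob_space_gamma_distr[OF k s])
  show ?thesis
    using integrable_gamma_distr_powr[OF k s t] integral_gamma_distr_powr[OF k s t]
    by (simp add: has_bochner_integral_iff prob_space)
qed

lemma integral_gamma_distr_ln:
  assumes k: "k > 0" and s: "s > 0"
  shows "(\<integral>x. ln x \<partial>gamma_distr k s) = ln s + Digamma k"
proof -
  let ?M = "gamma_distr k s" and ?E = "\<integral>x. ln x \<partial>gamma_distr k s"
  define F where "F t = s powr t * Gamma (k + t) / Gamma k" for t
  have "F 0 = 1"
    using s Gamma_real_pos[OF k] by (simp add: F_def)
  then have quotient_lim: "((\<lambda>t. (F t - 1) / t) \<longlongrightarrow> ln s + Digamma k) (at 0)"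
    using gamma_distr_moment_has_real_derivative[OF k s]
    unfolding F_def[abs_def] by (simp add: has_field_derivative_iff)
  have quotient: "integrable ?M (\<lambda>x. (x powr t - 1) / t)" "(\<integral>x. (x powr t - 1) / t \<partial>?M) = (F t - 1) / t"
    if "k + t > 0" for t
    using has_bochner_integral_gamma_distr_powr_quotient[OF k s that]
    by (auto simp: has_bochner_integral_iff F_def)
  have upper: "?E \<le> (F t - 1) / t" if t: "t > 0" for t
  proof -
    have "AE x in ?M. ln x \<le> (x powr t - 1) / t"
      using AE_gamma_distr_pos[of k s]
      by eventually_elim (use t mult_ln_le_powr_minus_one in \<open>simp add: pos_le_divide_eq mult.commute\<close>)
    moreover have kt: "k + t > 0"
      using k t by simp
    ultimately show ?thesis
      using integral_mono_AE[OF integrable_gamma_distr_ln[OF k s] quotient(1)[OF kt]] quotient(2)[OF kt] t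
      by simp
  qed
  have lower: "(F t - 1) / t \<le> ?E" if t: "t \<in> {- k<..<0}" for t
  proof -
    have "AE x in ?M. (x powr t - 1) / t \<le> ln x"
      using AE_gamma_distr_pos[of k s]
      by eventually_elim (use t mult_ln_le_powr_minus_one in \<open>simp add: neg_divide_le_eq mult.commute\<close>)
    moreover have kt: "k + t > 0"
      using t by simp
    ultimately show ?thesis
      using integral_mono_AE[OF quotient(1)[OF kt] integrable_gamma_distr_ln[OF k s]] quotient(2)[OF kt] t
      by simp
  qed
  have "?E \<le> ln s + Digamma k"
  proof (rule tendsto_lowerbound)
    show "((\<lambda>t. (F t - 1) / t) \<longlongrightarrow> ln s + Digamma k) (at_right 0)"
      using quotient_lim by (rule filterlim_mono) (simp_all add: at_le)
    show "\<forall>\<^sub>F t in at_right 0. ?E \<le> (F t - 1) / t"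
      using eventually_at_right_less[of 0] by eventually_elim (rule upper)
  qed simp
  moreover have "ln s + Digamma k \<le> ?E"
  proof (rule tendsto_upperbound)
    show "((\<lambda>t. (F t - 1) / t) \<longlongrightarrow> ln s + Digamma k) (at_left 0)"
      using quotient_lim by (rule filterlim_mono) (simp_all add: at_le)
    have "- k < 0"
      using k by simp
    from eventually_at_left_real[OF this]
    show "\<forall>\<^sub>F t in at_left 0. (F t - 1) / t \<le> ?E"
      by eventually_elim (rule lower)
  qed simp
  ultimately show ?thesis
    by linarith
qed

lemma integrable_gamma_distr_ln_one_plus:
  assumes k: "k > 0" and s: "s > 0" and a: "a \<ge> 0"
  shows "integrable (gamma_distr k s) (\<lambda>h. ln (1 + a * h))"
proof (rule Bochner_Integration.integrable_bound)
  show "integrable (gamma_distr k s) (\<lambda>h. a * h)"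
    using has_bochner_integral_gamma_distr_id[OF k s] by (auto intro: integrable.intros)
  show "AE h in gamma_distr k s. norm (ln (1 + a * h)) \<le> norm (a * h)"
    using AE_gamma_distr_pos[of k s]
  proof eventually_elim
    case (elim h)
    then have "0 \<le> ln (1 + a * h)" and "ln (1 + a * h) \<le> a * h"
      using a by (simp_all add: ln_add_one_self_le_self)
    then show ?case
      by simp
  qed
qed measurable

lemma ln_one_plus_exp_ge_tangent:
  fixes b u :: real
  assumes b: "b \<ge> 0"
  shows "ln (1 + b) + b / (1 + b) * u \<le> ln (1 + b * exp u)"
proof -
  define w where "w = b / (1 + b)"
  have w: "0 \<le> w" "w \<le> 1"
    using b by (auto simp: w_def)
  have "exp ((1 - w) *\<^sub>R 0 + w *\<^sub>R u) \<le> (1 - w) * exp 0 + w * exp u"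
    by (rule convex_onD[OF exp_convex]) (use w in auto)
  then have "exp (w * u) \<le> (1 + b * exp u) / (1 + b)"
    using b by (simp add: w_def field_simps)
  moreover have pos: "1 + b * exp u > 0" "1 + b > 0"
    using b by (auto intro: add_pos_nonneg)
  ultimately have "w * u \<le> ln ((1 + b * exp u) / (1 + b))"
    by (subst ln_ge_iff) auto
  also have "\<dots> = ln (1 + b * exp u) - ln (1 + b)"
    using pos by (subst ln_div) auto
  finally show ?thesis
    by (simp add: w_def)
qed

lemma integral_gamma_distr_ln_one_plus_ge:
  assumes k: "k > 0" and s: "s > 0" and a: "a \<ge> 0"
  shows "ln (1 + a * (s * exp (Digamma k))) \<le> (\<integral>h. ln (1 + a * h) \<partial>gamma_distr k s)"
proof -
  let ?M = "gamma_distr k s"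
  interpret prob_space ?M
    by (rule prob_space_gamma_distr[OF k s])
  define m where "m = s * exp (Digamma k)"
  define b where "b = a * m"
  have m: "m > 0" and "ln m = ln s + Digamma k"
    using s by (simp_all add: m_def ln_mult)
  \<comment> \<open>the integrand below is the tangent of u \<mapsto> ln (1 + a e^u) at the mean ln m of ln h\<close>
  then have "ln (1 + b) = (\<integral>h. ln (1 + b) + b / (1 + b) * (ln h - ln m) \<partial>?M)"
    using integrable_gamma_distr_ln[OF k s] integral_gamma_distr_ln[OF k s]
    by (simp add: prob_space)
  also have "\<dots> \<le> (\<integral>h. ln (1 + a * h) \<partial>?M)"
  proof (rule integral_mono_AE)
    show "integrable ?M (\<lambda>h. ln (1 + b) + b / (1 + b) * (ln h - ln m))"
      using integrable_gamma_distr_ln[OF k s] by simp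
    show "integrable ?M (\<lambda>h. ln (1 + a * h))"
      by (rule integrable_gamma_distr_ln_one_plus[OF k s a])
    show "AE h in ?M. ln (1 + b) + b / (1 + b) * (ln h - ln m) \<le> ln (1 + a * h)"
      using AE_gamma_distr_pos[of k s]
    proof eventually_elim
      case (elim h)
      then have "b * exp (ln h - ln m) = a * h"
        using m by (simp add: b_def exp_diff)
      moreover have "b \<ge> 0"
        using a m by (simp add: b_def)
      ultimately show ?case
        using ln_one_plus_exp_ge_tangent[of b "ln h - ln m"] by simp
    qed
  qed
  finally show ?thesis
    by (simp add: b_def m_def)
qed

lemma integral_gamma_distr_ln_one_plus_le_mean:
  assumes k: "k > 0" and s: "s > 0" and a: "a \<ge> 0"
  shows "(\<integral>h. ln (1 + a * h) \<partial>gamma_distr k s) \<le> ln (1 + a * (k * s))"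
proof -
  let ?M = "gamma_distr k s"
  interpret prob_space ?M
    by (rule prob_space_gamma_distr[OF k s])
  define c where "c = 1 + a * (k * s)"
  have c: "c > 0"
    using a k s by (simp add: c_def add_pos_nonneg)
  have mean: "integrable ?M (\<lambda>h. h)" "(\<integral>h. h \<partial>?M) = k * s"
    using has_bochner_integral_gamma_distr_id[OF k s] by (auto simp: has_bochner_integral_iff)
  have "(\<integral>h. ln (1 + a * h) \<partial>?M) \<le> (\<integral>h. ln c + (1 + a * h - c) / c \<partial>?M)"
  proof (rule integral_mono_AE)
    show "integrable ?M (\<lambda>h. ln (1 + a * h))"
      by (rule integrable_gamma_distr_ln_one_plus[OF k s a])
    show "integrable ?M (\<lambda>h. ln c + (1 + a * h - c) / c)"
      using mean by simp
    show "AE h in ?M. ln (1 + a * h) \<le> ln c + (1 + a * h - c) / c"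
      using AE_gamma_distr_pos[of k s]
    proof eventually_elim
      case (elim h)
      then have "1 + a * h > 0"
        using a by (simp add: add_pos_nonneg)
      then show ?case
        using ln_diff_le[OF _ c, of "1 + a * h"] by simp
    qed
  qed
  also have "\<dots> = ln c"
    using mean c by (simp add: prob_space c_def field_simps)
  finally show ?thesis
    by (simp add: c_def)
qed

lemma ln_one_plus_le_powr_div:
  fixes v t :: real
  assumes v: "v > 0" and t: "0 < t" "t \<le> 1"
  shows "ln (1 + v) \<le> v powr t / t"
proof (cases "v \<le> 1")
  case True
  have "ln (1 + v) \<le> v"
    using v by (intro ln_add_one_self_le_self) simp
  also have "v \<le> v powr t"
    using powr_mono'[of t 1 v] True v t by simp
  also have "\<dots> \<le> v powr t / t"
    using t v by (simp add: le_divide_eq)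
  finally show ?thesis .
next
  case False
  have "ln (1 + v) \<le> ln (2 * v)"
    using False v by simp
  also have "\<dots> = ln 2 + ln v"
    using v by (simp add: ln_mult)
  finally have "t * ln (1 + v) \<le> t * ln 2 + t * ln v"
    using t by (simp add: distrib_left[symmetric] mult_left_mono)
  also have "t * ln 2 \<le> ln 2"
    using t by (intro mult_left_le_one_le) simp_all
  also have "ln 2 \<le> (1::real)"
    using ln_2_less_1 by simp
  also have "t * ln v \<le> v powr t - 1"
    using mult_ln_le_powr_minus_one[OF v] .
  finally show ?thesis
    using t by (simp add: pos_le_divide_eq mult.commute)
qed

lemma integral_gamma_distr_ln_one_plus_le_powr:
  assumes k: "k > 0" and s: "s > 0" and a: "a > 0" and t: "0 < t" "t \<le> 1" "t < k"
  shows "(\<integral>h. ln (1 + a * h) \<partial>gamma_distr k s)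
           \<le> ln (1 + a * (s * exp (Digamma k))) + (a * s) powr - t * Gamma (k - t) / Gamma k / t"
proof -
  let ?M = "gamma_distr k s"
  interpret prob_space ?M
    by (rule prob_space_gamma_distr[OF k s])
  have kt: "k + - t > 0"
    using t by simp
  have "(\<integral>h. ln (1 + a * h) \<partial>?M) \<le> (\<integral>h. ln a + ln h + a powr - t * h powr - t / t \<partial>?M)"
  proof (rule integral_mono_AE)
    show "integrable ?M (\<lambda>h. ln (1 + a * h))"
      using integrable_gamma_distr_ln_one_plus[OF k s] a by simp
    show "integrable ?M (\<lambda>h. ln a + ln h + a powr - t * h powr - t / t)"
      using integrable_gamma_distr_ln[OF k s] integrable_gamma_distr_powr[OF k s kt] by simp
    show "AE h in ?M. ln (1 + a * h) \<le> ln a + ln h + a powr - t * h powr - t / t"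
      using AE_gamma_distr_pos[of k s]
    proof eventually_elim
      case (elim h)
      have ah: "a * h > 0"
        using a elim by simp
      have "1 + 1 / (a * h) > 0"
        using ah by (simp add: add_pos_pos)
      then have "ln (a * h) + ln (1 + 1 / (a * h)) = ln (a * h * (1 + 1 / (a * h)))"
        using ah by (simp add: ln_mult)
      also have "a * h * (1 + 1 / (a * h)) = 1 + a * h"
        using a elim by (simp add: field_simps)
      finally have "ln (1 + a * h) = ln (a * h) + ln (1 + 1 / (a * h))"
        by simp
      moreover have "ln (1 + 1 / (a * h)) \<le> (1 / (a * h)) powr t / t"
        using ah t by (intro ln_one_plus_le_powr_div) simp_all
      moreover have "(1 / (a * h)) powr t = a powr - t * h powr - t"
        using a elim by (simp add: powr_minus_divide powr_mult powr_divide)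
      ultimately show ?case
        using a elim by (simp add: ln_mult)
    qed
  qed
  also have "\<dots> = ln (a * (s * exp (Digamma k))) + (a * s) powr - t * Gamma (k - t) / Gamma k / t"
    using integrable_gamma_distr_ln[OF k s] integrable_gamma_distr_powr[OF k s kt]
      integral_gamma_distr_ln[OF k s] integral_gamma_distr_powr[OF k s kt] a s
    by (simp add: prob_space ln_mult powr_mult)
  also have "ln (a * (s * exp (Digamma k))) \<le> ln (1 + a * (s * exp (Digamma k)))"
    using a s by (subst ln_le_cancel_iff) (auto intro: add_pos_pos)
  finally show ?thesis
    by simp
qed

lemma Digamma_le_ln:
  fixes k :: real
  assumes k: "k > 0"
  shows "Digamma k \<le> ln k"
proof -
  have s: "1 / k > 0"
    using k by simp
  let ?M = "gamma_distr k (1 / k)"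
  interpret prob_space ?M
    by (rule prob_space_gamma_distr[OF k s])
  have mean: "integrable ?M (\<lambda>h. h)" "(\<integral>h. h \<partial>?M) = 1"
    using has_bochner_integral_gamma_distr_id[OF k s] k by (auto simp: has_bochner_integral_iff)
  have "Digamma k - ln k = (\<integral>h. ln h \<partial>?M)"
    using integral_gamma_distr_ln[OF k s] k by (simp add: ln_div)
  also have "\<dots> \<le> (\<integral>h. h - 1 \<partial>?M)"
    using AE_gamma_distr_pos[of k "1 / k"] mean(1) ln_le_minus_one
    by (intro integral_mono_AE integrable_gamma_distr_ln[OF k s]) (auto elim: AE_mp)
  also have "\<dots> = 0"
    using mean by (simp add: prob_space)
  finally show ?thesis
    by simp
qed

lemma ln_minus_inverse_le_Digamma:
  fixes k :: real
  assumes k: "k > 1"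
  shows "ln k - 1 / (k - 1) \<le> Digamma k"
proof -
  have k0: "k > 0" and s: "1 / k > 0" and k1: "k + - 1 > 0"
    using k by simp_all
  let ?M = "gamma_distr k (1 / k)"
  interpret prob_space ?M
    by (rule prob_space_gamma_distr[OF k0 s])
  have "Gamma k = (k - 1) * Gamma (k - 1)"
    using Gamma_plus1[of "k - 1"] k by (auto simp: nonpos_Ints_def)
  moreover have "Gamma (k - 1) > 0"
    using k by (intro Gamma_real_pos) simp
  then have "Gamma (k - 1) \<noteq> 0"
    by linarith
  ultimately have inverse_mean: "(\<integral>h. h powr - 1 \<partial>?M) = k / (k - 1)"
    using integral_gamma_distr_powr[OF k0 s k1] k by (simp add: powr_minus_divide)
  have "1 - k / (k - 1) = (\<integral>h. 1 - h powr - 1 \<partial>?M)"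
    using integrable_gamma_distr_powr[OF k0 s k1] inverse_mean by (simp add: prob_space)
  also have "\<dots> \<le> (\<integral>h. ln h \<partial>?M)"
  proof (rule integral_mono_AE)
    show "integrable ?M (\<lambda>h. 1 - h powr - 1)"
      using integrable_gamma_distr_powr[OF k0 s k1] by simp
    show "integrable ?M ln"
      by (rule integrable_gamma_distr_ln[OF k0 s])
    show "AE h in ?M. 1 - h powr - 1 \<le> ln h"
      using AE_gamma_distr_pos[of k "1 / k"]
    proof eventually_elim
      case (elim h)
      have "ln (1 / h) \<le> 1 / h - 1"
        using elim by (intro ln_le_minus_one) simp
      then show ?case
        using elim by (simp add: ln_div powr_minus_divide)
    qed
  qed
  also have "\<dots> = Digamma k - ln k"
    using integral_gamma_distr_ln[OF k0 s] k0 by (simp add: ln_div)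
  finally show ?thesis
    using k by (simp add: field_simps)
qed

lemma tendsto_Digamma_minus_ln_at_top: "((\<lambda>k::real. Digamma k - ln k) \<longlongrightarrow> 0) at_top"
proof (rule tendsto_sandwich)
  show "\<forall>\<^sub>F k in at_top. - 1 / (k - 1) \<le> Digamma k - ln (k::real)"
    using eventually_gt_at_top[of "1::real"]
    by eventually_elim (use ln_minus_inverse_le_Digamma in force)
  show "\<forall>\<^sub>F k in at_top. Digamma k - ln (k::real) \<le> 0"
    using eventually_gt_at_top[of "0::real"]
    by eventually_elim (use Digamma_le_ln in force)
  have "filterlim (\<lambda>k::real. - 1 + k) at_top at_top"
    by (rule filterlim_tendsto_add_at_top[OF tendsto_const filterlim_ident])
  then have "((\<lambda>k::real. - 1 / (- 1 + k)) \<longlongrightarrow> 0) at_top"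
    by (intro tendsto_divide_0[OF tendsto_const] filterlim_at_top_imp_at_infinity)
  then show "((\<lambda>k::real. - 1 / (k - 1)) \<longlongrightarrow> 0) at_top"
    by simp
qed simp

lemma tendsto_integral_gamma_distr_ln_one_plus_gap_at_top:
  assumes k: "k > 0" and s: "s > 0"
  shows "((\<lambda>a. (\<integral>h. ln (1 + a * h) \<partial>gamma_distr k s) - ln (1 + a * (s * exp (Digamma k)))) \<longlongrightarrow> 0) at_top"
proof (rule tendsto_sandwich)
  define t where "t = min 1 (k / 2)"
  have t: "0 < t" "t \<le> 1" "t < k"
    using k by (auto simp: t_def)
  define C where "C = Gamma (k - t) / Gamma k / t"
  show "\<forall>\<^sub>F a in at_top. 0 \<le> (\<integral>h. ln (1 + a * h) \<partial>gamma_distr k s) - ln (1 + a * (s * exp (Digamma k)))"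
    using eventually_ge_at_top[of 0]
    by eventually_elim (use integral_gamma_distr_ln_one_plus_ge[OF k s] in force)
  show "\<forall>\<^sub>F a in at_top. (\<integral>h. ln (1 + a * h) \<partial>gamma_distr k s) - ln (1 + a * (s * exp (Digamma k)))
      \<le> (a * s) powr - t * C"
    using eventually_gt_at_top[of 0]
    by eventually_elim (use integral_gamma_distr_ln_one_plus_le_powr[OF k s _ t] in \<open>force simp: C_def\<close>)
  have "filterlim (\<lambda>a. a * s) at_top at_top"
    using s by (intro filterlim_at_top_mult_tendsto_pos[OF tendsto_const] filterlim_ident)
  then have "((\<lambda>a. (a * s) powr - t) \<longlongrightarrow> 0) at_top"
    using t by (intro tendsto_neg_powr) simp_all
  then show "((\<lambda>a. (a * s) powr - t * C) \<longlongrightarrow> 0) at_top"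
    by (auto intro: tendsto_mult_left_zero)
qed simp

lemma tendsto_integral_gamma_distr_ln_one_plus_gap_shape_at_top:
  assumes g: "g > 0" and a: "a \<ge> 0"
  shows "((\<lambda>k. (\<integral>h. ln (1 + a * h) \<partial>gamma_distr k (g / k)) - ln (1 + a * (g / k * exp (Digamma k))))
           \<longlongrightarrow> 0) at_top"
proof (rule tendsto_sandwich)
  show "\<forall>\<^sub>F k in at_top. 0 \<le> (\<integral>h. ln (1 + a * h) \<partial>gamma_distr k (g / k)) - ln (1 + a * (g / k * exp (Digamma k)))"
    using eventually_gt_at_top[of 0]
  proof eventually_elim
    case (elim k)
    then show ?case
      using integral_gamma_distr_ln_one_plus_ge[OF elim _ a, of "g / k"] g by simp
  qed
  show "\<forall>\<^sub>F k in at_top. (\<integral>h. ln (1 + a * h) \<partial>gamma_distr k (g / k)) - ln (1 + a * (g / k * exp (Digamma k)))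
      \<le> ln (1 + a * g) - ln (1 + a * (g * exp (Digamma k - ln k)))"
    using eventually_gt_at_top[of 0]
  proof eventually_elim
    case (elim k)
    then have "g / k * exp (Digamma k) = g * exp (Digamma k - ln k)"
      by (simp add: exp_diff)
    then show ?case
      using integral_gamma_distr_ln_one_plus_le_mean[OF elim _ a, of "g / k"] g elim by simp
  qed
  have "1 + a * g > 0"
    using a g by (simp add: add_pos_nonneg)
  then have "((\<lambda>k. ln (1 + a * g) - ln (1 + a * (g * exp (Digamma k - ln k))))
      \<longlongrightarrow> ln (1 + a * g) - ln (1 + a * (g * exp 0))) at_top"
    by (intro tendsto_intros tendsto_Digamma_minus_ln_at_top) auto
  then show "((\<lambda>k. ln (1 + a * g) - ln (1 + a * (g * exp (Digamma k - ln k)))) \<longlongrightarrow> 0) at_top"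
    by simp
qed simp

theorem lemma1:
  fixes \<kappa> g p \<delta>2 :: real
  assumes "\<kappa> > 0" and "g > 0" and "p \<ge> 0" and "\<delta>2 > 0"
  shows "integrable (gamma_distr \<kappa> (g / \<kappa>)) (\<lambda>h. log 2 (1 + p * h / \<delta>2))
       \<and> (\<integral>h. log 2 (1 + p * h / \<delta>2) \<partial>gamma_distr \<kappa> (g / \<kappa>))
           \<ge> log 2 (1 + (exp (Digamma \<kappa>) / \<kappa>) * (p * g / \<delta>2))
       \<and> ((\<lambda>q. (\<integral>h. log 2 (1 + q * h / \<delta>2) \<partial>gamma_distr \<kappa> (g / \<kappa>))
                 - log 2 (1 + (exp (Digamma \<kappa>) / \<kappa>) * (q * g / \<delta>2)))
            \<longlongrightarrow> 0) at_top
       \<and> ((\<lambda>k. (\<integral>h. log 2 (1 + p * h / \<delta>2) \<partial>gamma_distr k (g / k))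
                 - log 2 (1 + (exp (Digamma k) / k) * (p * g / \<delta>2)))
            \<longlongrightarrow> 0) at_top"
proof -
  have s: "g / \<kappa> > 0" and a: "p / \<delta>2 \<ge> 0"
    using assms by simp_all
  have capacity: "log 2 (1 + q * h / \<delta>2) = ln (1 + q / \<delta>2 * h) / ln 2" for q h
    by (simp add: log_def)
  have bound: "log 2 (1 + (exp (Digamma k) / k) * (q * g / \<delta>2))
      = ln (1 + q / \<delta>2 * (g / k * exp (Digamma k))) / ln 2" for k q
    by (simp add: log_def field_simps)
  have gap: "(\<integral>h. log 2 (1 + q * h / \<delta>2) \<partial>gamma_distr k (g / k)) - log 2 (1 + (exp (Digamma k) / k) * (q * g / \<delta>2))
      = ((\<integral>h. ln (1 + q / \<delta>2 * h) \<partial>gamma_distr k (g / k)) - ln (1 + q / \<delta>2 * (g / k * exp (Digamma k)))) / ln 2"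
    for k q
    unfolding capacity bound by (simp add: diff_divide_distrib)
  have "filterlim (\<lambda>q. q / \<delta>2) at_top at_top"
    using filterlim_at_top_mult_tendsto_pos[OF tendsto_const _ filterlim_ident, of "1 / \<delta>2"] assms(4)
    by simp
  from filterlim_compose[OF tendsto_integral_gamma_distr_ln_one_plus_gap_at_top[OF assms(1) s] this]
  show ?thesis
    unfolding gap unfolding capacity bound
    using integrable_gamma_distr_ln_one_plus[OF assms(1) s a] integral_gamma_distr_ln_one_plus_ge[OF assms(1) s a]
      tendsto_integral_gamma_distr_ln_one_plus_gap_shape_at_top[OF assms(2) a]
    by (auto simp: divide_right_mono intro: tendsto_divide_zero)
qed

end
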